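(* Let $\kappa\in[0,1)$. There exists a unique solution $x\in(0,K(\kappa))$ of the equation $$\kappa'\,\mathrm{sc}_\kappa(x)-\mathrm{dc}_\kappa(x)+2\kappa'\,\mathrm{nc}_\kappa(x)=0$$ if and only if $\kappa\in\left(\tfrac{\sqrt3}{2},1\right)$ (and for $\kappa\notin(\tfrac{\sqrt3}{2},1)$ there is no solution in $(0,K(\kappa))$).
   Context: $\kappa'=\sqrt{1-\kappa^2}$; $\mathrm{sn}_\kappa,\mathrm{cn}_\kappa,\mathrm{dn}_\kappa$ are the Jacobi elliptic functions with modulus $\kappa$, with $\mathrm{sc}=\mathrm{sn}/\mathrm{cn}$, $\mathrm{nc}=1/\mathrm{cn}$, $\mathrm{dc}=\mathrm{dn}/\mathrm{cn}$. $K(\kappa)=\int_0^{\pi/2}(1-\kappa^2\sin^2\theta)^{-1/2}d\theta$ is the complete elliptic integral of the first kind. *)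

theory Defs
  imports "HOL-Analysis.Analysis"
begin

definition ell_integrand :: "real \<Rightarrow> real \<Rightarrow> real" where
  "ell_integrand k \<theta> = 1 / sqrt (1 - k\<^sup>2 * (sin \<theta>)\<^sup>2)"

definition ellF :: "real \<Rightarrow> real \<Rightarrow> real" where
  "ellF k \<phi> = (if 0 \<le> \<phi> then integral {0..\<phi>} (ell_integrand k)
                 else - integral {\<phi>..0} (ell_integrand k))"

definition ellK :: "real \<Rightarrow> real" where
  "ellK k = integral {0..pi/2} (ell_integrand k)"

definition jam :: "real \<Rightarrow> real \<Rightarrow> real" where
  "jam k x = (THE \<phi>. ellF k \<phi> = x)"

definition jsn :: "real \<Rightarrow> real \<Rightarrow> real" where
  "jsn k x = sin (jam k x)"

definition jcn :: "real \<Rightarrow> real \<Rightarrow> real" where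
  "jcn k x = cos (jam k x)"

definition jdn :: "real \<Rightarrow> real \<Rightarrow> real" where
  "jdn k x = sqrt (1 - k\<^sup>2 * (jsn k x)\<^sup>2)"

definition jsc :: "real \<Rightarrow> real \<Rightarrow> real" where
  "jsc k x = jsn k x / jcn k x"

definition jnc :: "real \<Rightarrow> real \<Rightarrow> real" where
  "jnc k x = 1 / jcn k x"

definition jdc :: "real \<Rightarrow> real \<Rightarrow> real" where
  "jdc k x = jdn k x / jcn k x"

definition compl_mod :: "real \<Rightarrow> real" where
  "compl_mod k = sqrt (1 - k\<^sup>2)"

end

theory Submission
  imports Defs
begin

text \<open>Since the integrand of \<open>F(\<phi>, \<kappa>)\<close> is at least 1, \<open>F\<close> is strictly increasing and continuous,
  so \<open>\<phi> \<mapsto> F(\<phi>, \<kappa>)\<close> maps \<open>(0, \<pi>/2)\<close> bijectively onto \<open>(0, K(\<kappa>))\<close> with inverse the amplitude;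
  composing with \<open>arcsin\<close>, the points \<open>x \<in> (0, K(\<kappa>))\<close> correspond bijectively to the values
  \<open>s = sn x \<in> (0, 1)\<close>. Multiplying the equation by \<open>cn x > 0\<close> turns it into
  \<open>\<kappa>' (s + 2) = sqrt (1 - \<kappa>\<^sup>2 s\<^sup>2)\<close>, and squaring gives \<open>(s + 2\<kappa>'\<^sup>2)\<^sup>2 = (1 - 2\<kappa>'\<^sup>2)\<^sup>2\<close>.
  Its only root in \<open>(0, 1)\<close> is \<open>s = 4\<kappa>\<^sup>2 - 3\<close>, which exists exactly when \<open>\<kappa>\<^sup>2 > 3/4\<close>.\<close>

lemma ell_radicand_pos:
  fixes k t :: real
  assumes "0 \<le> k" "k < 1"
  shows "0 < 1 - k\<^sup>2 * (sin t)\<^sup>2"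
proof -
  have "(sin t)\<^sup>2 \<le> 1" by (simp add: abs_square_le_1)
  moreover have "k\<^sup>2 < 1" using assms by (simp add: abs_square_less_1)
  ultimately have "k\<^sup>2 * (sin t)\<^sup>2 < 1"
    by (metis mult_left_le order_le_less_trans zero_le_power2)
  thus ?thesis by simp
qed

lemma ell_integrand_continuous_on:
  assumes "0 \<le> k" "k < 1"
  shows "continuous_on S (ell_integrand k)"
proof -
  have "sqrt (1 - k\<^sup>2 * (sin t)\<^sup>2) \<noteq> 0" for t
    using ell_radicand_pos[OF assms, of t] by simp
  thus ?thesis unfolding ell_integrand_def by (intro continuous_intros) auto
qed

lemma ell_integrand_integrable_on:
  assumes "0 \<le> k" "k < 1"
  shows "ell_integrand k integrable_on {a..b}"
  by (rule integrable_continuous_real[OF ell_integrand_continuous_on[OF assms]])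

lemma ell_integrand_ge_1:
  assumes "0 \<le> k" "k < 1"
  shows "1 \<le> ell_integrand k t"
proof -
  have "0 < sqrt (1 - k\<^sup>2 * (sin t)\<^sup>2)" "sqrt (1 - k\<^sup>2 * (sin t)\<^sup>2) \<le> 1"
    using ell_radicand_pos[OF assms, of t] by auto
  thus ?thesis unfolding ell_integrand_def by simp
qed

lemma ellF_0 [simp]: "ellF k 0 = 0"
  unfolding ellF_def by simp

lemma ellK_eq_ellF: "ellK k = ellF k (pi/2)"
  unfolding ellK_def ellF_def by simp

lemma integral_ell_integrand_ge:
  assumes "0 \<le> k" "k < 1" "a \<le> b"
  shows "b - a \<le> integral {a..b} (ell_integrand k)"
proof -
  have "integral {a..b} (\<lambda>_. 1::real) \<le> integral {a..b} (ell_integrand k)"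
    by (rule integral_le)
      (auto intro: ell_integrand_integrable_on[OF assms(1,2)] ell_integrand_ge_1[OF assms(1,2)])
  thus ?thesis using assms(3) by simp
qed

lemma ellF_diff_ge:
  assumes "0 \<le> k" "k < 1" "0 \<le> a" "a \<le> b"
  shows "b - a \<le> ellF k b - ellF k a"
proof -
  have "integral {0..a} (ell_integrand k) + integral {a..b} (ell_integrand k)
        = integral {0..b} (ell_integrand k)"
    using assms ell_integrand_integrable_on[OF assms(1,2)]
    by (intro Henstock_Kurzweil_Integration.integral_combine) auto
  thus ?thesis
    using integral_ell_integrand_ge[OF assms(1,2,4)] assms(3,4) unfolding ellF_def by simp
qed

lemma ellF_neg:
  assumes "0 \<le> k" "k < 1" "\<phi> < 0"
  shows "ellF k \<phi> < 0"
  using integral_ell_integrand_ge[OF assms(1,2), of \<phi> 0] assms(3) unfolding ellF_def by simp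

lemma jam_ellF:
  assumes "0 \<le> k" "k < 1" "0 \<le> \<phi>"
  shows "jam k (ellF k \<phi>) = \<phi>"
  unfolding jam_def
proof (rule the_equality)
  fix \<psi> assume eq: "ellF k \<psi> = ellF k \<phi>"
  have "\<phi> \<le> ellF k \<phi>" using ellF_diff_ge[OF assms(1,2) order_refl assms(3)] by simp
  with eq assms(3) have "\<not> ellF k \<psi> < 0" by simp
  then have "0 \<le> \<psi>" using ellF_neg[OF assms(1,2), of \<psi>] by linarith
  show "\<psi> = \<phi>"
  proof (rule linorder_cases[of \<psi> \<phi>])
    assume "\<psi> < \<phi>"
    then show ?thesis using ellF_diff_ge[OF assms(1,2) \<open>0 \<le> \<psi>\<close>, of \<phi>] eq by simp
  next
    assume "\<phi> < \<psi>"
    then show ?thesis using ellF_diff_ge[OF assms, of \<psi>] eq by simp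
  qed
qed simp

lemma ellF_in_interval:
  assumes "0 \<le> k" "k < 1" "0 < \<phi>" "\<phi> < pi/2"
  shows "ellF k \<phi> \<in> {0<..<ellK k}"
  using ellF_diff_ge[OF assms(1,2), of 0 \<phi>] ellF_diff_ge[OF assms(1,2), of \<phi> "pi/2"] assms
  by (auto simp: ellK_eq_ellF)

lemma ellF_jam:
  assumes "0 \<le> k" "k < 1" "x \<in> {0<..<ellK k}"
  shows "jam k x \<in> {0<..<pi/2}" "ellF k (jam k x) = x"
proof -
  have "continuous_on {0..pi/2} (\<lambda>t. integral {0..t} (ell_integrand k))"
    by (rule indefinite_integral_continuous_1[OF ell_integrand_integrable_on[OF assms(1,2)]])
  hence "continuous_on {0..pi/2} (ellF k)"
    by (rule continuous_on_eq) (auto simp: ellF_def)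
  then obtain \<phi> where \<phi>: "0 \<le> \<phi>" "\<phi> \<le> pi/2" "ellF k \<phi> = x"
    using IVT'[of "ellF k" 0 x "pi/2"] assms(3) by (force simp: ellK_eq_ellF)
  have "\<phi> \<noteq> 0" using \<phi>(3) assms(3) by auto
  moreover have "\<phi> \<noteq> pi/2"
  proof
    assume "\<phi> = pi/2"
    with \<phi>(3) have "x = ellK k" by (simp add: ellK_eq_ellF)
    then show False using assms(3) by simp
  qed
  moreover have "jam k x = \<phi>" using jam_ellF[OF assms(1,2) \<phi>(1)] \<phi>(3) by simp
  ultimately show "jam k x \<in> {0<..<pi/2}" "ellF k (jam k x) = x" using \<phi> by auto
qed

lemma bij_betw_ellF:
  assumes "0 \<le> k" "k < 1"
  shows "bij_betw (ellF k) {0<..<pi/2} {0<..<ellK k}"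
proof (rule bij_betw_byWitness[where f' = "jam k"])
  show "\<forall>\<phi>\<in>{0<..<pi/2}. jam k (ellF k \<phi>) = \<phi>"
    using jam_ellF[OF assms] by simp
  show "\<forall>x\<in>{0<..<ellK k}. ellF k (jam k x) = x"
    using ellF_jam(2)[OF assms] by blast
  show "ellF k ` {0<..<pi/2} \<subseteq> {0<..<ellK k}"
    using ellF_in_interval[OF assms] by auto
  show "jam k ` {0<..<ellK k} \<subseteq> {0<..<pi/2}"
    using ellF_jam(1)[OF assms] by blast
qed

lemma bij_betw_arcsin: "bij_betw arcsin {0<..<1} {0<..<pi/2}"
proof (rule bij_betw_byWitness[where f' = sin])
  show "arcsin ` {0<..<1} \<subseteq> {0<..<pi/2}"
  proof
    fix y assume "y \<in> arcsin ` {0<..<1}"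
    then obtain s where s: "0 < s" "s < 1" "y = arcsin s" by auto
    have "arcsin 0 < arcsin s" "arcsin s < arcsin 1"
      using s by (intro arcsin_less_arcsin; simp)+
    thus "y \<in> {0<..<pi/2}" using s by simp
  qed
  show "sin ` {0<..<pi/2} \<subseteq> {0<..<1}"
  proof
    fix y assume "y \<in> sin ` {0<..<pi/2}"
    then obtain \<phi> where \<phi>: "0 < \<phi>" "\<phi> < pi/2" "y = sin \<phi>" by auto
    have "0 < sin \<phi>" using \<phi> by (intro sin_gt_zero) auto
    moreover have "sin \<phi> < sin (pi/2)" using \<phi> by (intro sin_monotone_2pi) auto
    ultimately show "y \<in> {0<..<1}" using \<phi> by simp
  qed
qed (auto intro: arcsin_sin)

lemma bij_betw_ex1_iff:
  assumes "bij_betw f A B"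
  shows "(\<exists>!y. y \<in> B \<and> P y) \<longleftrightarrow> (\<exists>!x. x \<in> A \<and> P (f x))"
proof -
  have inj: "inj_on f A" and img: "f ` A = B" using assms by (auto simp: bij_betw_def)
  show ?thesis
  proof
    assume "\<exists>!y. y \<in> B \<and> P y"
    then obtain y where y: "y \<in> B" "P y" and uniq: "\<And>z. z \<in> B \<Longrightarrow> P z \<Longrightarrow> z = y"
      by blast
    from y(1) img obtain x where x: "x \<in> A" "f x = y" by blast
    show "\<exists>!x. x \<in> A \<and> P (f x)"
    proof (rule ex1I[of _ x])
      show "x \<in> A \<and> P (f x)" using x y by simp
      fix x' assume "x' \<in> A \<and> P (f x')"
      then have x': "x' \<in> A" "P (f x')" by auto
      then have "f x' \<in> B" using img by blast
      then have "f x' = f x" using uniq x'(2) x(2) by simp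
      then show "x' = x" using inj x(1) x'(1) by (simp add: inj_on_eq_iff)
    qed
  next
    assume "\<exists>!x. x \<in> A \<and> P (f x)"
    then show "\<exists>!y. y \<in> B \<and> P y" using img by blast
  qed
qed

lemma bij_betw_bex_iff:
  assumes "bij_betw f A B"
  shows "(\<exists>y \<in> B. P y) \<longleftrightarrow> (\<exists>x \<in> A. P (f x))"
  using assms by (auto simp: bij_betw_def)

lemma jacobi_equation_at_ellF_iff:
  fixes \<kappa> \<phi> :: real
  assumes "0 \<le> \<kappa>" "\<kappa> < 1" "0 < \<phi>" "\<phi> < pi/2"
  shows "compl_mod \<kappa> * jsc \<kappa> (ellF \<kappa> \<phi>) - jdc \<kappa> (ellF \<kappa> \<phi>)
           + 2 * compl_mod \<kappa> * jnc \<kappa> (ellF \<kappa> \<phi>) = 0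
         \<longleftrightarrow> compl_mod \<kappa> * (sin \<phi> + 2) = sqrt (1 - \<kappa>\<^sup>2 * (sin \<phi>)\<^sup>2)"
proof -
  have "jam \<kappa> (ellF \<kappa> \<phi>) = \<phi>" using jam_ellF[OF assms(1,2)] assms(3) by simp
  moreover have "0 < cos \<phi>" using assms(3,4) by (intro cos_gt_zero_pi) auto
  ultimately show ?thesis
    unfolding jsc_def jdc_def jnc_def jdn_def jsn_def jcn_def
    by (auto simp: field_simps)
qed

lemma compl_mod_equation_iff:
  fixes k s :: real
  assumes "0 \<le> k" "k < 1" "0 < s" "s < 1"
  shows "compl_mod k * (s + 2) = sqrt (1 - k\<^sup>2 * s\<^sup>2) \<longleftrightarrow> 3/4 < k\<^sup>2 \<and> s = 4 * k\<^sup>2 - 3"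
proof -
  define c where "c = 1 - k\<^sup>2"
  have c: "0 < c" using assms unfolding c_def by (simp add: abs_square_less_1)
  have "k\<^sup>2 * s\<^sup>2 \<le> 1" using assms by (intro mult_le_one) (auto simp: abs_square_le_1)
  then have "0 \<le> 1 - k\<^sup>2 * s\<^sup>2" by simp
  moreover have "compl_mod k * (s + 2) = sqrt (c * (s + 2)\<^sup>2)"
    using assms unfolding compl_mod_def c_def by (simp add: real_sqrt_mult)
  ultimately have "compl_mod k * (s + 2) = sqrt (1 - k\<^sup>2 * s\<^sup>2) \<longleftrightarrow> c * (s + 2)\<^sup>2 = 1 - k\<^sup>2 * s\<^sup>2"
    using c by simp
  also have "\<dots> \<longleftrightarrow> (s + 2 * c)\<^sup>2 = (1 - 2 * c)\<^sup>2"
    unfolding c_def by (simp add: algebra_simps power2_eq_square)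
  also have "\<dots> \<longleftrightarrow> s + 2 * c = \<bar>1 - 2 * c\<bar>"
    using c assms by (metis abs_of_pos add_pos_pos mult_pos_pos power2_abs real_sqrt_abs zero_less_numeral)
  also have "\<dots> \<longleftrightarrow> 3/4 < k\<^sup>2 \<and> s = 4 * k\<^sup>2 - 3"
    using c assms unfolding c_def by (auto simp: abs_if)
  finally show ?thesis .
qed

lemma sqrt3_half_less_iff:
  fixes k :: real
  assumes "0 \<le> k"
  shows "sqrt 3 / 2 < k \<longleftrightarrow> 3/4 < k\<^sup>2"
proof -
  have "sqrt 3 / 2 = sqrt (3/4)" by (simp add: real_sqrt_divide)
  thus ?thesis using assms real_sqrt_less_iff[of "3/4" "k\<^sup>2"] by simp
qed

theorem mainTheorem13:
  fixes \<kappa> :: real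
  assumes "0 \<le> \<kappa>" and "\<kappa> < 1"
  shows "((\<exists>!x. x \<in> {0<..<ellK \<kappa>} \<and>
             compl_mod \<kappa> * jsc \<kappa> x - jdc \<kappa> x + 2 * compl_mod \<kappa> * jnc \<kappa> x = 0)
          \<longleftrightarrow> \<kappa> \<in> {sqrt 3 / 2<..<1})
       \<and> (\<kappa> \<notin> {sqrt 3 / 2<..<1} \<longrightarrow>
          \<not> (\<exists>x \<in> {0<..<ellK \<kappa>}.
             compl_mod \<kappa> * jsc \<kappa> x - jdc \<kappa> x + 2 * compl_mod \<kappa> * jnc \<kappa> x = 0))"
proof -
  define P where "P x \<longleftrightarrow> compl_mod \<kappa> * jsc \<kappa> x - jdc \<kappa> x + 2 * compl_mod \<kappa> * jnc \<kappa> x = 0"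
    for x
  have bij: "bij_betw (ellF \<kappa> \<circ> arcsin) {0<..<1} {0<..<ellK \<kappa>}"
    using bij_betw_arcsin bij_betw_ellF[OF assms] by (rule bij_betw_trans)
  have P_iff: "P ((ellF \<kappa> \<circ> arcsin) s) \<longleftrightarrow> 3/4 < \<kappa>\<^sup>2 \<and> s = 4 * \<kappa>\<^sup>2 - 3"
    if "s \<in> {0<..<1}" for s
    using that bij_betw_apply[OF bij_betw_arcsin that] unfolding P_def
    by (simp add: jacobi_equation_at_ellF_iff[OF assms] compl_mod_equation_iff[OF assms])
  have root: "4 * \<kappa>\<^sup>2 - 3 \<in> {0<..<1}" if "3/4 < \<kappa>\<^sup>2"
    using that assms by (simp add: abs_square_less_1)
  have "(\<exists>!x. x \<in> {0<..<ellK \<kappa>} \<and> P x) \<longleftrightarrow> 3/4 < \<kappa>\<^sup>2"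
    unfolding bij_betw_ex1_iff[OF bij] using P_iff root by blast
  moreover have "(\<exists>x \<in> {0<..<ellK \<kappa>}. P x) \<longleftrightarrow> 3/4 < \<kappa>\<^sup>2"
    unfolding bij_betw_bex_iff[OF bij] using P_iff root by blast
  ultimately show ?thesis
    using sqrt3_half_less_iff[OF assms(1)] assms(2) unfolding P_def by auto
qed

end
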